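(* Let $f$ be an analytic function of the 5-complex variable $u$ on an open set, written $f(u)=\sum_{k=0}^4h_kP_k(x_0,x_1,x_2,x_3,x_4)$ with real-valued $P_k$ (and $h_0=1$). Then, with indices taken modulo 5, for every $k,m\in\{0,\dots,4\}$ and every $j\in\{0,\dots,4\}$, $$\frac{\partial P_{k+j}}{\partial x_j}=\frac{\partial P_k}{\partial x_0}$$ (e.g. $\partial P_0/\partial x_0=\partial P_1/\partial x_1=\dots=\partial P_4/\partial x_4$ and $\partial P_1/\partial x_0=\partial P_2/\partial x_1=\partial P_3/\partial x_2=\partial P_4/\partial x_3=\partial P_0/\partial x_4$), and $$\frac{\partial^2P_k}{\partial x_i\partial x_j}=\frac{\partial^2P_k}{\partial x_{i'}\partial x_{j'}}\quad\text{whenever } i+j\equiv i'+j'\pmod 5.$$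
   Context: A 5-complex number is $u=x_0+h_1x_1+h_2x_2+h_3x_3+h_4x_4$ with real $x_j$, with componentwise addition and the commutative associative bilinear multiplication determined by $h_jh_k=h_{(j+k)\bmod 5}$, $h_0=1$; identify it with the point $(x_0,\dots,x_4)\in\mathbb{R}^5$ and use the modulus $|u|=(\sum x_j^2)^{1/2}$. A 5-complex function $f$ is analytic if at each point $u_0$ of its domain the limit $f'(u_0)=\lim_{u\to u_0}\{f(u)-f(u_0)\}/(u-u_0)$ exists independently of the direction of approach (the quotient being taken with 5-complex multiplication by an inverse, along $u$ for which $u-u_0$ is invertible), with $f'$ again analytic (e.g. $f$ given locally by a convergent power series in $u$). *)

theory Defs
  imports "HOL-Analysis.Analysis" "HOL-Library.Numeral_Type"
begin

text \<open>5-complex numbers u = x0 + h1 x1 + ... + h4 x4 are identified with points of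
  real^5; the index type 5 has arithmetic modulo 5, so h_j h_k = h_((j+k) mod 5).\<close>

type_synonym tc5 = "real ^ 5"

definition tc_one :: tc5 where
  "tc_one = (\<chi> k. if k = 0 then 1 else 0)"

definition tc_mult :: "tc5 \<Rightarrow> tc5 \<Rightarrow> tc5" where
  "tc_mult u v = (\<chi> k. \<Sum>j\<in>UNIV. u $ j * v $ (k - j))"

definition tc_invertible :: "tc5 \<Rightarrow> bool" where
  "tc_invertible u \<longleftrightarrow> (\<exists>v. tc_mult u v = tc_one)"

definition tc_inverse :: "tc5 \<Rightarrow> tc5" where
  "tc_inverse u = (SOME v. tc_mult u v = tc_one)"

definition tc_has_deriv :: "(tc5 \<Rightarrow> tc5) \<Rightarrow> tc5 \<Rightarrow> tc5 \<Rightarrow> bool" where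
  "tc_has_deriv f D u0 \<longleftrightarrow>
     ((\<lambda>u. tc_mult (f u - f u0) (tc_inverse (u - u0))) \<longlongrightarrow> D)
       (at u0 within {u. tc_invertible (u - u0)})"

definition tc_analytic_on :: "(tc5 \<Rightarrow> tc5) \<Rightarrow> tc5 set \<Rightarrow> bool" where
  "tc_analytic_on f S \<longleftrightarrow>
     (\<exists>D :: nat \<Rightarrow> tc5 \<Rightarrow> tc5. D 0 = f \<and>
        (\<forall>n. \<forall>u\<in>S. tc_has_deriv (D n) (D (Suc n) u) u))"

definition has_partial :: "(tc5 \<Rightarrow> real) \<Rightarrow> 5 \<Rightarrow> tc5 \<Rightarrow> real \<Rightarrow> bool" where
  "has_partial P j x d \<longleftrightarrow> ((\<lambda>t. P (x + t *\<^sub>R axis j 1)) has_real_derivative d) (at 0)"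

definition partial :: "(tc5 \<Rightarrow> real) \<Rightarrow> 5 \<Rightarrow> tc5 \<Rightarrow> real" where
  "partial P j x = deriv (\<lambda>t. P (x + t *\<^sub>R axis j 1)) 0"

end

theory Submission
  imports Defs
begin

(* Differentiate along a coordinate direction: take increments u - x = t h_j with real
   t ~= 0. Their inverse is t^-1 h_(-j), and multiplication by h_(-j) merely shifts the
   coordinates, so component m - j of the difference quotient is the ordinary difference
   quotient of component m. Hence dP_m/dx_j = (f')_(m-j), which depends only on m - j.
   Applying this once more to f' (the domain being open, the first partials agree with the
   components of f' near x) gives d^2 P_k/dx_i dx_j = (f'')_(k-i-j), which depends only
   on i + j. *)

lemma tc_mult_axis_left: "tc_mult (axis j c) v = (\<chi> k. c * v $ (k - j))"
proof -
  have "(\<Sum>i\<in>UNIV. axis j c $ i * v $ (k - i)) = c * v $ (k - j)" for k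
    by (simp add: axis_def if_distrib[of "\<lambda>a. a * b" for b] cong: if_cong)
  then show ?thesis by (simp add: tc_mult_def vec_eq_iff)
qed

lemma tc_mult_axis_right: "tc_mult v (axis j c) = (\<chi> k. v $ (k - j) * c)"
proof -
  have "(k - i = j) = (i = k - j)" for k i :: 5
    by (metis diff_add_cancel add_diff_cancel_left')
  then have "(\<Sum>i\<in>UNIV. v $ i * axis j c $ (k - i)) = v $ (k - j) * c" for k
    by (simp add: axis_def if_distrib[of "\<lambda>a. b * a" for b] cong: if_cong)
  then show ?thesis by (simp add: tc_mult_def vec_eq_iff)
qed

lemma tc_mult_axis_eq_one_iff:
  assumes "t \<noteq> 0"
  shows "tc_mult (axis j t) v = tc_one \<longleftrightarrow> v = axis (-j) (1 / t)"
proof -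
  have "tc_mult (axis j t) v = tc_one \<longleftrightarrow> (\<forall>k. t * v $ (k - j) = (if k = 0 then 1 else 0))"
    by (simp add: tc_mult_axis_left tc_one_def vec_eq_iff)
  also have "\<dots> \<longleftrightarrow> (\<forall>m. t * v $ m = (if m = -j then 1 else 0))"
    by (metis add_diff_cancel diff_add_cancel eq_neg_iff_add_eq_0)
  also have "\<dots> \<longleftrightarrow> v = axis (-j) (1 / t)"
    using assms by (auto simp: vec_eq_iff axis_def field_simps)
  finally show ?thesis .
qed

lemma tc_invertible_axis: "t \<noteq> 0 \<Longrightarrow> tc_invertible (axis j t)"
  unfolding tc_invertible_def using tc_mult_axis_eq_one_iff by blast

lemma tc_inverse_axis: "t \<noteq> 0 \<Longrightarrow> tc_inverse (axis j t) = axis (-j) (1 / t)"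
  unfolding tc_inverse_def using tc_mult_axis_eq_one_iff by simp

lemma tc_has_deriv_imp_has_partial:
  assumes "tc_has_deriv g G x"
  shows "has_partial (\<lambda>u. g u $ m) j x (G $ (m - j))"
proof -
  have scale_axis: "t *\<^sub>R axis j 1 = axis j t" for t :: real
    by (simp add: vec_eq_iff axis_def)
  let ?A = "{u. tc_invertible (u - x)}"
  have "filterlim (\<lambda>t::real. x + axis j t) (at x within ?A) (at 0)"
  proof (rule filterlim_at_withinI)
    have "((\<lambda>t::real. x + t *\<^sub>R axis j 1) \<longlongrightarrow> x) (at 0)"
      by (intro tendsto_eq_intros) auto
    then show "((\<lambda>t::real. x + axis j t) \<longlongrightarrow> x) (at 0)"
      by (simp only: scale_axis)
    have "x + axis j t \<in> ?A - {x}" if "t \<noteq> 0" for t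
      using that tc_invertible_axis by simp
    then show "\<forall>\<^sub>F t in at 0. x + axis j t \<in> ?A - {x}"
      by (simp add: eventually_at_filter)
  qed
  from tendsto_vec_nth[OF filterlim_compose[OF assms[unfolded tc_has_deriv_def] this]]
  have "((\<lambda>t. tc_mult (g (x + axis j t) - g x) (tc_inverse (axis j t)) $ (m - j))
          \<longlongrightarrow> G $ (m - j)) (at 0)"
    by simp
  then have "((\<lambda>t. (g (x + axis j t) $ m - g x $ m) / t) \<longlongrightarrow> G $ (m - j)) (at 0)"
    by (rule Lim_transform_eventually)
      (simp add: eventually_at_filter tc_inverse_axis tc_mult_axis_right)
  then show ?thesis
    by (simp add: has_partial_def has_field_derivative_iff scale_axis axis_eq_0_iff[THEN iffD2])
qed

lemma partial_eq_if_tc_has_deriv: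
  "tc_has_deriv g G x \<Longrightarrow> partial (\<lambda>u. g u $ m) j x = G $ (m - j)"
  using tc_has_deriv_imp_has_partial unfolding has_partial_def partial_def
  by (rule DERIV_imp_deriv)

lemma has_partial_transform_open:
  assumes "has_partial Q j x d" "open S" "x \<in> S" "\<And>y. y \<in> S \<Longrightarrow> R y = Q y"
  shows "has_partial R j x d"
proof -
  have "open ((\<lambda>t::real. x + t *\<^sub>R axis j 1) -` S)"
    using \<open>open S\<close> by (intro continuous_open_vimage continuous_intros)
  then show ?thesis
    using assms unfolding has_partial_def
    by (elim has_field_derivative_transform_within_open) auto
qed

lemma tc_has_second_deriv_imp_has_partial_partial:
  assumes "open S" "x \<in> S" "\<And>y. y \<in> S \<Longrightarrow> tc_has_deriv g (G y) y" "tc_has_deriv G G' x"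
  shows "has_partial (partial (\<lambda>u. g u $ k) j) i x (G' $ (k - (i + j)))"
proof (rule has_partial_transform_open[OF _ \<open>open S\<close> \<open>x \<in> S\<close>])
  show "has_partial (\<lambda>u. G u $ (k - j)) i x (G' $ (k - (i + j)))"
    using tc_has_deriv_imp_has_partial[OF assms(4), of "k - j" i] by (simp add: diff_diff_eq add.commute)
  show "partial (\<lambda>u. g u $ k) j y = G y $ (k - j)" if "y \<in> S" for y
    using partial_eq_if_tc_has_deriv[OF assms(3)[OF that]] .
qed

theorem mainTheorem9:
  fixes f :: "tc5 \<Rightarrow> tc5" and S :: "tc5 set" and P :: "5 \<Rightarrow> tc5 \<Rightarrow> real"
  assumes "open S"
    and "tc_analytic_on f S"
    and "\<And>k u. P k u = f u $ k"
  shows "(\<forall>x\<in>S. \<forall>k j. \<exists>d. has_partial (P (k + j)) j x d \<and> has_partial (P k) 0 x d)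
       \<and> (\<forall>x\<in>S. \<forall>k i j i' j'. i + j = i' + j' \<longrightarrow>
            (\<exists>d. has_partial (partial (P k) j) i x d \<and> has_partial (partial (P k) j') i' x d))"
proof -
  obtain D where "D 0 = f" and D: "\<And>n u. u \<in> S \<Longrightarrow> tc_has_deriv (D n) (D (Suc n) u) u"
    using assms(2) unfolding tc_analytic_on_def by blast
  then have P: "P k = (\<lambda>u. D 0 u $ k)" for k
    using assms(3) by auto
  have first: "has_partial (P m) j x (D 1 x $ (m - j))" if "x \<in> S" for x m j
    unfolding P using tc_has_deriv_imp_has_partial[OF D[OF that]] by simp
  have second: "has_partial (partial (P k) j) i x (D 2 x $ (k - (i + j)))" if "x \<in> S" for x k i j
    unfolding P numeral_2_eq_2
    using tc_has_second_deriv_imp_has_partial_partial[OF assms(1) that D D[OF that]] by simp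
  show ?thesis
  proof (intro conjI ballI allI impI)
    show "\<exists>d. has_partial (P (k + j)) j x d \<and> has_partial (P k) 0 x d" if "x \<in> S" for x k j
      using first[OF that, of "k + j" j] first[OF that, of k 0] by auto
    show "\<exists>d. has_partial (partial (P k) j) i x d \<and> has_partial (partial (P k) j') i' x d"
      if "x \<in> S" "i + j = i' + j'" for x k i j i' j'
      using second[OF that(1), of k j i] second[OF that(1), of k j' i'] that(2) by auto
  qed
qed

end
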